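(* Let $S$ be a linear relation in $\mathfrak H$ with numerical range $\mathcal W(S)=\{0\}$ (equivalently, $(\varphi',\varphi)=0$ for all $\{\varphi,\varphi'\}\in S$, i.e. $\mathrm{dom}\,S\perp\mathrm{ran}\,S$). Then $S$ is nonnegative, its Friedrichs extension is $S_{\rm F}=\overline{\mathrm{dom}}\,S\times\mathrm{mul}\,S^*$, and its Kreĭn type extension at $0$ is $S_{{\rm K},0}=\ker S^*\times\overline{\mathrm{ran}}\,S$.
   Context: Linear relations in $\mathfrak H$ are linear subspaces of $\mathfrak H\times\mathfrak H$; $\mathrm{dom},\mathrm{ran},\ker T=\{f:\{f,0\}\in T\},\mathrm{mul}\,T=\{g:\{0,g\}\in T\}$; $T^*$ adjoint, $T^{**}$ closure, products $RT=\{\{f,h\}:\exists g,\{f,g\}\in T,\{g,h\}\in R\}$. Numerical range $\mathcal W(S)=\{(\varphi',\varphi):\{\varphi,\varphi'\}\in S,\|\varphi\|=1\}$ (and $\{0\}$ if $\mathrm{dom}\,S=\{0\}$). For a nonnegative relation $S$, $\mathfrak t(S)[\varphi,\psi]=(\varphi',\psi)$ on $\mathrm{dom}\,S$; a representing map for $\mathfrak t(S)$ (with $c=0$) is a linear operator $Q$ into a Hilbert space with $\mathrm{dom}\,Q=\mathrm{dom}\,S$ and $\mathfrak t(S)[\varphi,\psi]=(Q\varphi,Q\psi)$; companion relation $J=\{\{Q\varphi,\varphi'\}:\{\varphi,\varphi'\}\in S\}$. Friedrichs extension $S_{\rm F}=Q^*Q^{**}$ and Kreĭn type extension $S_{{\rm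 K},0}=J^{**}J^*$ (both independent of the choice of $Q$). *)

theory Defs
  imports "HOL-Analysis.Analysis"
begin

class complex_vector = real_vector +
  fixes scaleC :: "complex \<Rightarrow> 'a \<Rightarrow> 'a" (infixr \<open>*\<^sub>C\<close> 75)
  assumes scaleC_add_right: "a *\<^sub>C (x + y) = a *\<^sub>C x + a *\<^sub>C y"
    and scaleC_add_left: "(a + b) *\<^sub>C x = a *\<^sub>C x + b *\<^sub>C x"
    and scaleC_scaleC: "a *\<^sub>C (b *\<^sub>C x) = (a * b) *\<^sub>C x"
    and scaleC_one: "1 *\<^sub>C x = x"
    and scaleR_scaleC: "r *\<^sub>R x = complex_of_real r *\<^sub>C x"

class complex_inner = complex_vector + real_normed_vector +
  fixes cinner :: "'a \<Rightarrow> 'a \<Rightarrow> complex"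
  assumes cinner_commute: "cinner x y = cnj (cinner y x)"
    and cinner_add_left: "cinner (x + y) z = cinner x z + cinner y z"
    and cinner_scaleC_left: "cinner (a *\<^sub>C x) y = a * cinner x y"
    and cinner_self_real: "Im (cinner x x) = 0"
    and cinner_self_nonneg: "0 \<le> Re (cinner x x)"
    and cinner_self_eq_zero: "cinner x x = 0 \<longleftrightarrow> x = 0"
    and norm_eq_sqrt_cinner: "norm x = sqrt (Re (cinner x x))"

class chilbert_space = complex_inner + complete_space


text \<open>Sanity check: the classes are inhabited (\<open>\<complex>\<close> is a complex Hilbert space).\<close>
instantiation complex :: chilbert_space
begin
definition scaleC_complex :: "complex \<Rightarrow> complex \<Rightarrow> complex" where "scaleC_complex a x = a * x"
definition cinner_complex :: "complex \<Rightarrow> complex \<Rightarrow> complex" where "cinner_complex x y = x * cnj y"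
instance
proof
  fix x y z :: complex and a b :: complex and r :: real
  show "a *\<^sub>C (x + y) = a *\<^sub>C x + a *\<^sub>C y" "(a + b) *\<^sub>C x = a *\<^sub>C x + b *\<^sub>C x"
    "a *\<^sub>C (b *\<^sub>C x) = (a * b) *\<^sub>C x" "1 *\<^sub>C x = x" "r *\<^sub>R x = complex_of_real r *\<^sub>C x"
    by (simp_all add: scaleC_complex_def algebra_simps scaleR_conv_of_real)
  show "cinner x y = cnj (cinner y x)" "cinner (x + y) z = cinner x z + cinner y z"
    "cinner (a *\<^sub>C x) y = a * cinner x y" "Im (cinner x x) = 0"
    by (simp_all add: cinner_complex_def scaleC_complex_def algebra_simps)
  show "0 \<le> Re (cinner x x)"
    by (simp add: cinner_complex_def complex_mult_cnj)
  show "cinner x x = 0 \<longleftrightarrow> x = 0"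
    by (simp add: cinner_complex_def)
  show "norm x = sqrt (Re (cinner x x))"
    by (simp add: cinner_complex_def complex_mult_cnj cmod_def power2_eq_square)
qed
end

definition linear_rel :: "('a::complex_vector \<times> 'b::complex_vector) set \<Rightarrow> bool" where
  "linear_rel T \<longleftrightarrow> (0, 0) \<in> T \<and>
     (\<forall>f g f' g'. (f, g) \<in> T \<longrightarrow> (f', g') \<in> T \<longrightarrow> (f + f', g + g') \<in> T) \<and>
     (\<forall>c f g. (f, g) \<in> T \<longrightarrow> (c *\<^sub>C f, c *\<^sub>C g) \<in> T)"

definition rdom :: "('a \<times> 'b) set \<Rightarrow> 'a set" where
  "rdom T = {f. \<exists>g. (f, g) \<in> T}"

definition rran :: "('a \<times> 'b) set \<Rightarrow> 'b set" where
  "rran T = {g. \<exists>f. (f, g) \<in> T}"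

definition rker :: "('a \<times> 'b::zero) set \<Rightarrow> 'a set" where
  "rker T = {f. (f, 0) \<in> T}"

definition rmul :: "('a::zero \<times> 'b) set \<Rightarrow> 'b set" where
  "rmul T = {g. (0, g) \<in> T}"

definition radj :: "('a::complex_inner \<times> 'b::complex_inner) set \<Rightarrow> ('b \<times> 'a) set" where
  "radj T = {(h, k). \<forall>f g. (f, g) \<in> T \<longrightarrow> cinner g h = cinner f k}"

text \<open>Product \<open>R T\<close>: first \<open>T\<close>, then \<open>R\<close>.\<close>
definition rprod :: "('b \<times> 'c) set \<Rightarrow> ('a \<times> 'b) set \<Rightarrow> ('a \<times> 'c) set" where
  "rprod R T = {(f, h). \<exists>g. (f, g) \<in> T \<and> (g, h) \<in> R}"

definition numrange :: "('a::complex_inner \<times> 'a) set \<Rightarrow> complex set" where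
  "numrange S = (if rdom S = {0} then {0}
     else {cinner \<phi>' \<phi> | \<phi> \<phi>'. (\<phi>, \<phi>') \<in> S \<and> norm \<phi> = 1})"

definition nonneg_rel :: "('a::complex_inner \<times> 'a) set \<Rightarrow> bool" where
  "nonneg_rel S \<longleftrightarrow> (\<forall>\<phi> \<phi>'. (\<phi>, \<phi>') \<in> S \<longrightarrow> Im (cinner \<phi>' \<phi>) = 0 \<and> 0 \<le> Re (cinner \<phi>' \<phi>))"

definition tform :: "('a::complex_inner \<times> 'a) set \<Rightarrow> 'a \<Rightarrow> 'a \<Rightarrow> complex" where
  "tform S \<phi> \<psi> = cinner (SOME \<phi>'. (\<phi>, \<phi>') \<in> S) \<psi>"

text \<open>Representing map (lower bound \<open>c = 0\<close>): a linear operator \<open>Q\<close> with domain \<open>dom S\<close>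
  into a Hilbert space, given by a function on \<open>dom S\<close>; its graph is \<open>op_graph S Q\<close>.\<close>
definition op_graph :: "('a \<times> 'a) set \<Rightarrow> ('a \<Rightarrow> 'b) \<Rightarrow> ('a \<times> 'b) set" where
  "op_graph S Q = {(\<phi>, Q \<phi>) | \<phi>. \<phi> \<in> rdom S}"

definition representing_map :: "('a::complex_inner \<times> 'a) set \<Rightarrow> ('a \<Rightarrow> 'b::complex_inner) \<Rightarrow> bool" where
  "representing_map S Q \<longleftrightarrow> linear_rel (op_graph S Q) \<and>
     (\<forall>\<phi> \<psi>. \<phi> \<in> rdom S \<longrightarrow> \<psi> \<in> rdom S \<longrightarrow> tform S \<phi> \<psi> = cinner (Q \<phi>) (Q \<psi>))"

definition companion :: "('a \<times> 'a) set \<Rightarrow> ('a \<Rightarrow> 'b) \<Rightarrow> ('b \<times> 'a) set" where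
  "companion S Q = {(Q \<phi>, \<phi>') | \<phi> \<phi>'. (\<phi>, \<phi>') \<in> S}"

definition friedrichs_ext :: "('a::complex_inner \<times> 'a) set \<Rightarrow> ('a \<Rightarrow> 'b::complex_inner) \<Rightarrow> ('a \<times> 'a) set" where
  "friedrichs_ext S Q = rprod (radj (op_graph S Q)) (radj (radj (op_graph S Q)))"

definition krein_ext0 :: "('a::complex_inner \<times> 'a) set \<Rightarrow> ('a \<Rightarrow> 'b::complex_inner) \<Rightarrow> ('a \<times> 'a) set" where
  "krein_ext0 S Q = rprod (radj (radj (companion S Q))) (radj (companion S Q))"

end

theory Submission
  imports Defs
begin

text \<open>If \<open>W(S) = {0}\<close> then \<open>(\<phi>', \<phi>) = 0\<close> on \<open>S\<close>, so the form \<open>t(S)\<close> vanishes and every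
  representing map \<open>Q\<close> is zero on \<open>dom S\<close>: its graph is \<open>dom S \<times> {0}\<close> and the companion
  relation is \<open>{0} \<times> ran S\<close>. The adjoint of a product \<open>A \<times> B\<close> of subspaces is
  \<open>B\<^sup>\<bottom> \<times> A\<^sup>\<bottom>\<close>, and by the projection theorem \<open>B\<^sup>\<bottom>\<^sup>\<bottom>\<close> is the closure of \<open>B\<close>; composing
  the resulting product relations gives \<open>S\<^sub>F\<close> and \<open>S\<^sub>K\<^sub>,\<^sub>0\<close>.\<close>

lemma cinner_zero_left [simp]: "cinner 0 y = 0"
  using cinner_add_left [of 0 0 y] by simp

lemma cinner_zero_right [simp]: "cinner x 0 = 0"
  by (metis cinner_commute cinner_zero_left complex_cnj_zero)

lemma cinner_eq_zero_sym: "cinner x y = 0 \<longleftrightarrow> cinner y x = 0"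
  by (metis cinner_commute complex_cnj_zero_iff)

lemma cinner_add_right: "cinner x (y + z) = cinner x y + cinner x z"
  by (metis cinner_add_left cinner_commute complex_cnj_add)

lemma cinner_scaleC_right: "cinner x (a *\<^sub>C y) = cnj a * cinner x y"
  by (metis cinner_commute cinner_scaleC_left complex_cnj_mult)

lemma cinner_diff_left: "cinner (x - y) z = cinner x z - cinner y z"
  using cinner_add_left [of "x - y" y z] by (simp add: algebra_simps)

lemma cinner_diff_right: "cinner x (y - z) = cinner x y - cinner x z"
  by (metis cinner_commute cinner_diff_left complex_cnj_diff)

lemma power2_norm_eq_cinner: "(norm (x::'a::complex_inner))\<^sup>2 = Re (cinner x x)"
  using norm_eq_sqrt_cinner [of x] cinner_self_nonneg [of x] by simp

lemma power2_norm_add: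
  fixes x y :: "'a::complex_inner"
  shows "(norm (x + y))\<^sup>2 = (norm x)\<^sup>2 + (norm y)\<^sup>2 + 2 * Re (cinner x y)"
proof -
  have "Re (cinner y x) = Re (cinner x y)"
    by (subst cinner_commute) simp
  then show ?thesis
    by (simp add: power2_norm_eq_cinner cinner_add_left cinner_add_right)
qed

lemma power2_norm_diff:
  fixes x y :: "'a::complex_inner"
  shows "(norm (x - y))\<^sup>2 = (norm x)\<^sup>2 + (norm y)\<^sup>2 - 2 * Re (cinner x y)"
proof -
  have "Re (cinner y x) = Re (cinner x y)"
    by (subst cinner_commute) simp
  then show ?thesis
    by (simp add: power2_norm_eq_cinner cinner_diff_left cinner_diff_right)
qed

lemma parallelogram_law:
  fixes x y :: "'a::complex_inner"
  shows "(norm (x + y))\<^sup>2 + (norm (x - y))\<^sup>2 = 2 * (norm x)\<^sup>2 + 2 * (norm y)\<^sup>2"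
  by (simp add: power2_norm_add power2_norm_diff)

lemma norm_scaleC:
  fixes x :: "'a::complex_inner"
  shows "norm (c *\<^sub>C x) = cmod c * norm x"
proof -
  have "cinner (c *\<^sub>C x) (c *\<^sub>C x) = (c * cnj c) * cinner x x"
    by (simp add: cinner_scaleC_left cinner_scaleC_right mult.assoc)
  also have "c * cnj c = complex_of_real ((cmod c)\<^sup>2)"
    by (rule complex_norm_square [symmetric])
  finally have "Re (cinner (c *\<^sub>C x) (c *\<^sub>C x)) = (cmod c)\<^sup>2 * Re (cinner x x)"
    by simp
  then have "(norm (c *\<^sub>C x))\<^sup>2 = ((cmod c) * norm x)\<^sup>2"
    by (simp add: power2_norm_eq_cinner power_mult_distrib)
  then show ?thesis
    by (simp add: power2_eq_iff_nonneg)
qed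

lemma bounded_linear_scaleC: "bounded_linear (\<lambda>x::'a::complex_inner. c *\<^sub>C x)"
proof (rule bounded_linear_intro [where K = "cmod c"])
  show "c *\<^sub>C (x + y) = c *\<^sub>C x + c *\<^sub>C y" for x y
    by (rule scaleC_add_right)
  show "c *\<^sub>C (r *\<^sub>R x) = r *\<^sub>R (c *\<^sub>C x)" for r x
    by (simp add: scaleR_scaleC scaleC_scaleC mult.commute)
  show "norm (c *\<^sub>C x) \<le> norm x * cmod c" for x :: 'a
    by (simp add: norm_scaleC mult.commute)
qed

lemma cinner_polarization:
  fixes x y :: "'a::complex_inner"
  shows "cinner x y = complex_of_real (((norm (x + y))\<^sup>2 - (norm (x - y))\<^sup>2) / 4)
      + \<i> * complex_of_real (((norm (x + \<i> *\<^sub>C y))\<^sup>2 - (norm (x - \<i> *\<^sub>C y))\<^sup>2) / 4)"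
  by (rule complex_eqI) (simp_all add: power2_norm_add power2_norm_diff cinner_scaleC_right)

lemma tendsto_cinner [tendsto_intros]:
  assumes "(f \<longlongrightarrow> a) F" and "(g \<longlongrightarrow> b) F"
  shows "((\<lambda>x. cinner (f x) (g x)) \<longlongrightarrow> cinner a b) F"
proof -
  have "((\<lambda>x. \<i> *\<^sub>C g x) \<longlongrightarrow> \<i> *\<^sub>C b) F"
    using bounded_linear.tendsto [OF bounded_linear_scaleC assms(2)] .
  then show ?thesis
    by (subst (1 2) cinner_polarization) (intro tendsto_intros assms, simp_all)
qed

lemma continuous_on_cinner [continuous_intros]:
  "continuous_on S f \<Longrightarrow> continuous_on S g \<Longrightarrow> continuous_on S (\<lambda>x. cinner (f x) (g x))"
  unfolding continuous_on_def by (blast intro: tendsto_cinner)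

definition orth :: "'a::complex_inner set \<Rightarrow> 'a set" where
  "orth A = {k. \<forall>y\<in>A. cinner y k = 0}"

lemma zero_in_orth [simp]: "0 \<in> orth A"
  by (simp add: orth_def)

lemma orth_zero [simp]: "orth {0} = UNIV"
  by (simp add: orth_def)

lemma orth_UNIV [simp]: "orth UNIV = {0}"
proof -
  have "k = 0" if "k \<in> orth UNIV" for k
    using that cinner_self_eq_zero [of k] by (simp add: orth_def)
  then show ?thesis
    using zero_in_orth by blast
qed

lemma closed_orth: "closed (orth A)"
proof -
  have "orth A = (\<Inter>y\<in>A. {k. cinner y k = 0})"
    by (auto simp: orth_def)
  moreover have "closed {k. cinner y k = 0}" for y
    by (intro closed_Collect_eq continuous_on_cinner continuous_on_const continuous_on_id)
  ultimately show ?thesis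
    by auto
qed

lemma closure_subset_orth_orth: "closure A \<subseteq> orth (orth A)"
proof (rule closure_minimal [OF _ closed_orth])
  show "A \<subseteq> orth (orth A)"
    unfolding orth_def using cinner_eq_zero_sym by blast
qed

lemma Cauchy_minimizing_sequence:
  fixes x :: "'a::complex_inner"
  assumes "convex C" and f_in: "\<And>n. f n \<in> C"
    and f_min: "\<And>n. (norm (x - f n))\<^sup>2 \<le> (infdist x C)\<^sup>2 + inverse (Suc n)"
  shows "Cauchy f"
proof (rule CauchyI)
  have bound: "(norm (f m - f n))\<^sup>2 \<le> 2 * inverse (Suc m) + 2 * inverse (Suc n)" for m n
  proof -
    define mid where "mid = (1/2::real) *\<^sub>R f m + (1/2::real) *\<^sub>R f n"
    have "mid \<in> C"
      unfolding mid_def by (rule convexD [OF \<open>convex C\<close> f_in f_in]) auto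
    then have "infdist x C \<le> norm (x - mid)"
      by (metis infdist_le dist_norm)
    then have "4 * (infdist x C)\<^sup>2 \<le> 4 * (norm (x - mid))\<^sup>2"
      by (simp add: infdist_nonneg power_mono)
    also have "4 * (norm (x - mid))\<^sup>2 = (norm ((x - f m) + (x - f n)))\<^sup>2"
    proof -
      have "(x - f m) + (x - f n) = 2 *\<^sub>R (x - mid)"
        by (simp add: mid_def algebra_simps scaleR_2)
      then show ?thesis
        by (simp add: power_mult_distrib)
    qed
    finally have "4 * (infdist x C)\<^sup>2 \<le> (norm ((x - f m) + (x - f n)))\<^sup>2" .
    moreover have "(norm (f m - f n))\<^sup>2
        = 2 * (norm (x - f m))\<^sup>2 + 2 * (norm (x - f n))\<^sup>2 - (norm ((x - f m) + (x - f n)))\<^sup>2"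
      using parallelogram_law [of "x - f m" "x - f n"] by (simp add: norm_minus_commute)
    ultimately show ?thesis
      using f_min [of m] f_min [of n] by linarith
  qed
  fix e :: real
  assume "0 < e"
  then obtain N :: nat where "N > 0" and N: "inverse N < e\<^sup>2 / 4"
    using ex_inverse_of_nat_less [of "e\<^sup>2 / 4"] by auto
  have "norm (f m - f n) < e" if "m \<ge> N" "n \<ge> N" for m n
  proof -
    have "inverse (real (Suc m)) \<le> inverse N" "inverse (real (Suc n)) \<le> inverse N"
      using that \<open>N > 0\<close> by (simp_all add: le_imp_inverse_le)
    then have "(norm (f m - f n))\<^sup>2 < e\<^sup>2"
      using bound [of m n] N by linarith
    then show ?thesis
      using \<open>0 < e\<close> by (simp add: power_less_imp_less_base less_imp_le)
  qed
  then show "\<exists>M. \<forall>m\<ge>M. \<forall>n\<ge>M. norm (f m - f n) < e"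
    by blast
qed

lemma closed_convex_nearest_point:
  fixes C :: "'a::{complex_inner, complete_space} set"
  assumes "closed C" and "convex C" and "C \<noteq> {}"
  obtains l where "l \<in> C" and "\<And>y. y \<in> C \<Longrightarrow> dist x l \<le> dist x y"
proof -
  define d where "d = infdist x C"
  have "\<exists>y\<in>C. (norm (x - y))\<^sup>2 \<le> d\<^sup>2 + inverse (Suc n)" for n
  proof -
    have "d = sqrt (d\<^sup>2)"
      by (simp add: d_def infdist_nonneg)
    also have "\<dots> < sqrt (d\<^sup>2 + inverse (Suc n))"
      by (rule real_sqrt_less_mono) (simp del: of_nat_Suc)
    finally have "(INF y\<in>C. dist x y) < sqrt (d\<^sup>2 + inverse (Suc n))"
      using \<open>C \<noteq> {}\<close> by (simp add: d_def infdist_notempty)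
    moreover have "bdd_below (dist x ` C)"
      by (rule bdd_belowI2 [of _ 0]) simp
    ultimately obtain y where "y \<in> C" and "dist x y < sqrt (d\<^sup>2 + inverse (Suc n))"
      using cINF_less_iff [OF \<open>C \<noteq> {}\<close>] by blast
    then have "(dist x y)\<^sup>2 < (sqrt (d\<^sup>2 + inverse (Suc n)))\<^sup>2"
      by (intro power_strict_mono) auto
    then have "(norm (x - y))\<^sup>2 \<le> d\<^sup>2 + inverse (Suc n)"
      by (simp add: dist_norm)
    with \<open>y \<in> C\<close> show ?thesis ..
  qed
  then obtain f where f_in: "\<And>n. f n \<in> C"
    and f_min: "\<And>n. (norm (x - f n))\<^sup>2 \<le> d\<^sup>2 + inverse (Suc n)"
    by metis
  have "Cauchy f"
    using \<open>convex C\<close> f_in f_min unfolding d_def by (rule Cauchy_minimizing_sequence)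
  then obtain l where lim: "f \<longlonglongrightarrow> l"
    using Cauchy_convergent_iff convergent_def by blast
  have "l \<in> C"
    using closed_sequentially [OF \<open>closed C\<close>] f_in lim by blast
  have "(norm (x - l))\<^sup>2 \<le> d\<^sup>2"
  proof (rule LIMSEQ_le)
    show "(\<lambda>n. (norm (x - f n))\<^sup>2) \<longlonglongrightarrow> (norm (x - l))\<^sup>2"
      by (intro tendsto_intros lim)
    show "(\<lambda>n. d\<^sup>2 + inverse (Suc n)) \<longlonglongrightarrow> d\<^sup>2"
      using tendsto_add [OF tendsto_const LIMSEQ_inverse_real_of_nat] by simp
    show "\<exists>N. \<forall>n\<ge>N. (norm (x - f n))\<^sup>2 \<le> d\<^sup>2 + inverse (Suc n)"
      using f_min by blast
  qed
  then have "dist x l \<le> d"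
    unfolding dist_norm by (rule power2_le_imp_le) (simp add: d_def infdist_nonneg)
  show ?thesis
  proof (rule that [OF \<open>l \<in> C\<close>])
    fix y
    assume "y \<in> C"
    then have "d \<le> dist x y"
      by (simp add: d_def infdist_le)
    with \<open>dist x l \<le> d\<close> show "dist x l \<le> dist x y"
      by linarith
  qed
qed

lemma cinner_eq_zero_if_norm_minimal:
  fixes z y :: "'a::complex_inner"
  assumes minimal: "\<And>t. norm z \<le> norm (z - t *\<^sub>C y)"
  shows "cinner z y = 0"
proof (cases "y = 0")
  case False
  define c where "c = cinner z y"
  define N where "N = (norm y)\<^sup>2"
  have "N > 0"
    using False by (simp add: N_def)
  define t where "t = c / complex_of_real N"
  have "Re (cinner z (t *\<^sub>C y)) = (cmod c)\<^sup>2 / N"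
  proof -
    have "cinner z (t *\<^sub>C y) = (c * cnj c) / complex_of_real N"
      by (simp add: cinner_scaleC_right t_def c_def)
    also have "\<dots> = complex_of_real ((cmod c)\<^sup>2 / N)"
      by (simp only: of_real_divide complex_norm_square)
    finally show ?thesis
      by simp
  qed
  moreover have "(norm (t *\<^sub>C y))\<^sup>2 = (cmod c)\<^sup>2 / N"
  proof -
    have "norm (t *\<^sub>C y) = cmod c / N * norm y"
      using \<open>N > 0\<close> by (simp add: norm_scaleC t_def norm_divide)
    then have "(norm (t *\<^sub>C y))\<^sup>2 = (cmod c)\<^sup>2 / N\<^sup>2 * N"
      by (simp only: power_mult_distrib power_divide N_def [symmetric])
    with \<open>N > 0\<close> show ?thesis
      by (simp add: power2_eq_square)
  qed
  ultimately have "(norm (z - t *\<^sub>C y))\<^sup>2 = (norm z)\<^sup>2 - (cmod c)\<^sup>2 / N"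
    by (simp add: power2_norm_diff)
  moreover have "(norm z)\<^sup>2 \<le> (norm (z - t *\<^sub>C y))\<^sup>2"
    using minimal by (simp add: power_mono)
  ultimately have "(cmod c)\<^sup>2 / N \<le> 0"
    by linarith
  with \<open>N > 0\<close> show ?thesis
    by (simp add: c_def divide_le_0_iff)
qed simp

definition csubspace :: "'a::complex_vector set \<Rightarrow> bool" where
  "csubspace D \<longleftrightarrow> 0 \<in> D \<and> (\<forall>x\<in>D. \<forall>y\<in>D. x + y \<in> D) \<and> (\<forall>c. \<forall>x\<in>D. c *\<^sub>C x \<in> D)"

lemma csubspace_imp_subspace: "csubspace D \<Longrightarrow> subspace D"
  by (simp add: csubspace_def subspace_def scaleR_scaleC)

lemma orth_orth_eq_closure:
  fixes D :: "'a::chilbert_space set"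
  assumes "csubspace D"
  shows "orth (orth D) = closure D"
proof
  show "orth (orth D) \<subseteq> closure D"
  proof
    fix x
    assume x: "x \<in> orth (orth D)"
    have "convex D"
      using assms by (intro subspace_imp_convex csubspace_imp_subspace)
    have "closure D \<noteq> {}"
      using assms closure_subset by (auto simp: csubspace_def)
    then obtain l where l: "l \<in> closure D" and nearest: "\<And>v. v \<in> closure D \<Longrightarrow> dist x l \<le> dist x v"
      by (rule closed_convex_nearest_point [where x = x, OF closed_closure convex_closure [OF \<open>convex D\<close>]]) blast
    define z where "z = x - l"
    have "cinner z y = 0" if "y \<in> D" for y
    proof (rule cinner_eq_zero_if_norm_minimal)
      fix t
      have "(\<lambda>v. v + t *\<^sub>C y) ` closure D \<subseteq> closure D"
      proof (rule image_closure_subset)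
        show "continuous_on (closure D) (\<lambda>v. v + t *\<^sub>C y)"
          by (intro continuous_on_add continuous_on_id continuous_on_const)
        have "v + t *\<^sub>C y \<in> D" if "v \<in> D" for v
          using assms \<open>y \<in> D\<close> that unfolding csubspace_def by blast
        then show "(\<lambda>v. v + t *\<^sub>C y) ` D \<subseteq> closure D"
          using closure_subset by blast
      qed simp
      then have "dist x l \<le> dist x (l + t *\<^sub>C y)"
        using l by (intro nearest) blast
      then show "norm z \<le> norm (z - t *\<^sub>C y)"
        by (simp add: z_def dist_norm algebra_simps)
    qed
    then have "z \<in> orth D"
      unfolding orth_def using cinner_eq_zero_sym by blast
    moreover have "l \<in> orth (orth D)"
      using l closure_subset_orth_orth by blast
    ultimately have "cinner z x = 0" and "cinner z l = 0"
      using x unfolding orth_def by blast+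
    moreover have "cinner z z = cinner z x - cinner z l"
      by (simp add: z_def cinner_diff_right)
    ultimately have "cinner z z = 0"
      by simp
    then show "x \<in> closure D"
      using l cinner_self_eq_zero [of z] by (simp add: z_def)
  qed
qed (rule closure_subset_orth_orth)

lemma linear_rel_zero: "linear_rel T \<Longrightarrow> (0, 0) \<in> T"
  by (simp add: linear_rel_def)

lemma linear_rel_add: "linear_rel T \<Longrightarrow> (f, g) \<in> T \<Longrightarrow> (f', g') \<in> T \<Longrightarrow> (f + f', g + g') \<in> T"
  by (simp add: linear_rel_def)

lemma linear_rel_scaleC: "linear_rel T \<Longrightarrow> (f, g) \<in> T \<Longrightarrow> (c *\<^sub>C f, c *\<^sub>C g) \<in> T"
  by (simp add: linear_rel_def)

lemma csubspace_rdom: "linear_rel S \<Longrightarrow> csubspace (rdom S)"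
  unfolding csubspace_def rdom_def by (blast intro: linear_rel_zero linear_rel_add linear_rel_scaleC)

lemma csubspace_rran: "linear_rel S \<Longrightarrow> csubspace (rran S)"
  unfolding csubspace_def rran_def by (blast intro: linear_rel_zero linear_rel_add linear_rel_scaleC)

lemma rmul_radj: "rmul (radj T) = orth (rdom T)"
  by (auto simp: rmul_def radj_def orth_def rdom_def)

lemma rker_radj: "rker (radj T) = orth (rran T)"
  by (auto simp: rker_def radj_def orth_def rran_def)

lemma radj_Times: "0 \<in> A \<Longrightarrow> 0 \<in> B \<Longrightarrow> radj (A \<times> B) = orth B \<times> orth A"
  by (fastforce simp: radj_def orth_def)

lemma rprod_Times: "B \<inter> C \<noteq> {} \<Longrightarrow> rprod (C \<times> D) (A \<times> B) = A \<times> D"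
  by (auto simp: rprod_def)

definition neutral_rel :: "('a::complex_inner \<times> 'a) set \<Rightarrow> bool" where
  "neutral_rel S \<longleftrightarrow> (\<forall>\<phi> \<phi>'. (\<phi>, \<phi>') \<in> S \<longrightarrow> cinner \<phi>' \<phi> = 0)"

lemma numrange_eq_zero_imp_neutral_rel:
  assumes "linear_rel S" and "numrange S = {0}"
  shows "neutral_rel S"
  unfolding neutral_rel_def
proof (intro allI impI)
  fix \<phi> \<phi>'
  assume "(\<phi>, \<phi>') \<in> S"
  show "cinner \<phi>' \<phi> = 0"
  proof (cases "\<phi> = 0")
    case False
    define r where "r = 1 / norm \<phi>"
    have "(r *\<^sub>R \<phi>, r *\<^sub>R \<phi>') \<in> S"
      using assms(1) \<open>(\<phi>, \<phi>') \<in> S\<close> by (simp add: linear_rel_scaleC scaleR_scaleC)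
    moreover have "norm (r *\<^sub>R \<phi>) = 1"
      using False by (simp add: r_def)
    moreover have "numrange S = {cinner \<psi>' \<psi> | \<psi> \<psi>'. (\<psi>, \<psi>') \<in> S \<and> norm \<psi> = 1}"
      using False \<open>(\<phi>, \<phi>') \<in> S\<close> by (auto simp: numrange_def rdom_def)
    ultimately have "cinner (r *\<^sub>R \<phi>') (r *\<^sub>R \<phi>) \<in> numrange S"
      by blast
    then have "cinner (r *\<^sub>R \<phi>') (r *\<^sub>R \<phi>) = 0"
      using assms(2) by simp
    then show ?thesis
      using False by (simp add: scaleR_scaleC cinner_scaleC_left cinner_scaleC_right r_def)
  qed simp
qed

lemma neutral_rel_imp_nonneg_rel: "neutral_rel S \<Longrightarrow> nonneg_rel S"
  by (simp add: neutral_rel_def nonneg_rel_def)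

lemma representing_map_vanishes:
  assumes "representing_map S Q" and "neutral_rel S" and "\<phi> \<in> rdom S"
  shows "Q \<phi> = 0"
proof -
  obtain \<phi>' where "(\<phi>, \<phi>') \<in> S"
    using \<open>\<phi> \<in> rdom S\<close> by (auto simp: rdom_def)
  then have "tform S \<phi> \<phi> = 0"
    unfolding tform_def by (rule someI2) (use \<open>neutral_rel S\<close> in \<open>simp add: neutral_rel_def\<close>)
  then have "cinner (Q \<phi>) (Q \<phi>) = 0"
    using assms(1,3) by (simp add: representing_map_def)
  then show ?thesis
    using cinner_self_eq_zero by blast
qed

lemma op_graph_neutral_rel:
  assumes "representing_map S Q" and "neutral_rel S"
  shows "op_graph S Q = rdom S \<times> {0}"
  using representing_map_vanishes [OF assms] by (auto simp: op_graph_def)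

lemma companion_neutral_rel:
  assumes "representing_map S Q" and "neutral_rel S"
  shows "companion S Q = {0} \<times> rran S"
  using representing_map_vanishes [OF assms] by (force simp: companion_def rdom_def rran_def)

theorem lemma8p2:
  fixes S :: "('a::chilbert_space \<times> 'a) set" and Q :: "'a \<Rightarrow> 'b::chilbert_space"
  assumes "linear_rel S" and "numrange S = {0}"
  shows "nonneg_rel S \<and>
    (representing_map S Q \<longrightarrow>
       friedrichs_ext S Q = closure (rdom S) \<times> rmul (radj S) \<and>
       krein_ext0 S Q = rker (radj S) \<times> closure (rran S))"
proof (intro conjI impI)
  have neutral: "neutral_rel S"
    using assms by (rule numrange_eq_zero_imp_neutral_rel)
  then show "nonneg_rel S"
    by (rule neutral_rel_imp_nonneg_rel)
  have dom: "csubspace (rdom S)" and ran: "csubspace (rran S)"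
    using assms(1) by (rule csubspace_rdom, rule csubspace_rran)
  then have "0 \<in> rdom S" "0 \<in> rran S"
    by (simp_all add: csubspace_def)
  assume Q: "representing_map S Q"
  have "radj (op_graph S Q) = UNIV \<times> orth (rdom S)"
    using \<open>0 \<in> rdom S\<close> by (simp add: op_graph_neutral_rel [OF Q neutral] radj_Times)
  then have "radj (radj (op_graph S Q)) = closure (rdom S) \<times> {0}"
    by (simp add: radj_Times orth_orth_eq_closure [OF dom])
  then show "friedrichs_ext S Q = closure (rdom S) \<times> rmul (radj S)"
    unfolding friedrichs_ext_def \<open>radj (op_graph S Q) = _\<close> by (simp add: rprod_Times rmul_radj)
  have "radj (companion S Q) = orth (rran S) \<times> UNIV"
    using \<open>0 \<in> rran S\<close> by (simp add: companion_neutral_rel [OF Q neutral] radj_Times)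
  then have "radj (radj (companion S Q)) = {0} \<times> closure (rran S)"
    by (simp add: radj_Times orth_orth_eq_closure [OF ran])
  then show "krein_ext0 S Q = rker (radj S) \<times> closure (rran S)"
    unfolding krein_ext0_def \<open>radj (companion S Q) = _\<close> by (simp add: rprod_Times rker_radj)
qed

end
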